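(* For all positive integers $k$ and $r$, $$W(k+r-1,r)=\frac{(-1)^{k+r-1}2^r}{(k-1)!(r-1)!}\int_0^1\frac{\log^{k-1}\!\left(\frac{1-t}{1+t}\right)\arctan(t)^{r-1}}{1+t^2}\,dt,$$ $$\bar T(\{1\}_{r-1},k)=\frac{(-1)^{k+r-1}2^r}{(k-1)!(r-1)!}\int_0^1\frac{\log^{k-1}\!\left(\frac{1-t}{1+t}\right)\left(\frac{\pi}{4}-\arctan(t)\right)^{r-1}}{1+t^2}\,dt.$$
   Context: $\{1\}_a$ denotes the sequence of $a$ ones. For positive integers $k_1,\dots,k_r$, $\bar T(k_1,\ldots,k_r):=2^r\sum_{0<n_1<\cdots<n_r}\frac{(-1)^{n_r}}{(2n_1-1)^{k_1}(2n_2-2)^{k_2}\cdots(2n_r-r)^{k_r}}$. $I(k,r)$ is the set of tuples $(k_1,\dots,k_r)$ of positive integers with sum $k$, and $W(k,r):=\sum_{(k_1,\dots,k_r)\in I(k,r)}\bar T(k_1,\dots,k_r)$. *)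

theory Defs
  imports "HOL-Analysis.Analysis"
begin

definition idx_set :: "nat \<Rightarrow> nat \<Rightarrow> nat list set" where
  "idx_set r N = {ns. length ns = r \<and> sorted_wrt (<) ns \<and> (\<forall>x\<in>set ns. 0 < x \<and> x < N)}"

definition Tbar_term :: "nat list \<Rightarrow> nat list \<Rightarrow> real" where
  "Tbar_term ks ns = (-1) ^ (last ns) /
     (\<Prod>j<length ks. (2 * real (ns ! j) - real (j + 1)) ^ (ks ! j))"

text \<open>Tbar(k_1,...,k_r), the multiple series summed in the order of n_r
  (limit of partial sums over n_r < N).\<close>
definition Tbar :: "nat list \<Rightarrow> real" where
  "Tbar ks = 2 ^ length ks *
     lim (\<lambda>N. \<Sum>ns\<in>idx_set (length ks) N. Tbar_term ks ns)"

definition I_set :: "nat \<Rightarrow> nat \<Rightarrow> nat list set" where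
  "I_set k r = {ks. length ks = r \<and> (\<forall>x\<in>set ks. 0 < x) \<and> sum_list ks = k}"

definition W :: "nat \<Rightarrow> nat \<Rightarrow> real" where
  "W k r = (\<Sum>ks\<in>I_set k r. Tbar ks)"

end

theory Submission
  imports Defs "HOL-Real_Asymp.Real_Asymp"
begin

text \<open>
  Put \<open>G_N(t) = \<Sum> (-1)^n_r t^(2 n_r - r) / \<Prod>_j (2 n_j - j)^k_j\<close>, summed over
  \<open>0 < n_1 < \<dots> < n_r < N\<close>, so that \<open>Tbar = 2^r lim G_N(1)\<close>. Since
  \<open>\<integral>_0^t s^(x-1) ln(t/s)^j / j! ds = t^x / x^(j+1)\<close>, appending an index \<open>k\<close> acts on \<open>G_N\<close> as
  \<open>G \<mapsto> \<integral>_0^t ln(t/s)^(k-1) / (k-1)! \<cdot> (-G(s)) / (1 + s^2) ds\<close>, up to the tail of a geometric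
  series, which contributes \<open>O(log^r N / N)\<close>. Hence \<open>G_N\<close> converges uniformly on \<open>[0,1]\<close> to an
  iterated integral.

  For the tuple \<open>(1,\<dots>,1,k)\<close> the inner integrals are \<open>(-arctan t)^(r-1) / (r-1)!\<close>. For \<open>W\<close>,
  the sums \<open>W_fun m q\<close> of the iterated integrals over all compositions satisfy
  \<open>W_fun (m+1) q' = W_fun (m+1) (q-1) / t - W_fun m q / (1 + t^2)\<close>; weighting with
  \<open>(-ln t)^a / a!\<close> leaves \<open>W_log (m+1) e' = - W_log m e / (1 + t^2)\<close>, and \<open>m\<close> integrations by
  parts against \<open>(\<pi>/4 - arctan s)^i / i!\<close> turn \<open>W_log (m+1) e 1\<close> into a single integral. In
  both cases the substitution \<open>s = (1-t)/(1+t)\<close>, which exchanges \<open>arctan s\<close> and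
  \<open>\<pi>/4 - arctan t\<close>, yields the stated formulas.
\<close>

lemma one_add_power2_pos [simp]: "0 < 1 + (s::real) ^ 2"
  by (simp add: add_pos_nonneg)

lemma one_add_power2_neq_zero [simp]: "1 + (s::real) ^ 2 \<noteq> 0"
  using one_add_power2_pos[of s] by linarith

lemma has_real_derivative_power_div_fact:
  assumes "(f has_real_derivative D) (at x)"
  shows "((\<lambda>x. f x ^ Suc j / fact (Suc j)) has_real_derivative f x ^ j / fact j * D) (at x)"
proof -
  have "((\<lambda>x. f x ^ Suc j) has_real_derivative real (Suc j) * f x ^ j * D) (at x)"
    using DERIV_chain2[OF DERIV_pow assms, of "Suc j"] by simp
  then have "((\<lambda>x. f x ^ Suc j / fact (Suc j)) has_real_derivative
          real (Suc j) * f x ^ j * D / fact (Suc j)) (at x)"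
    by (rule DERIV_cdivide)
  also have "real (Suc j) * f x ^ j * D / fact (Suc j) = f x ^ j / fact j * D"
    by (simp add: fact_Suc field_simps del: of_nat_Suc)
  finally show ?thesis .
qed

lemma has_real_derivative_indefinite_integral:
  fixes f :: "real \<Rightarrow> real"
  assumes "f integrable_on {a..b}" "u \<in> {a<..<b}" "isCont f u"
  shows "((\<lambda>x. integral {a..x} f) has_real_derivative f u) (at u)"
proof -
  have "((\<lambda>x. integral {a..x} f) has_vector_derivative f u) (at u within {a..b})"
    using assms integral_has_vector_derivative_continuous_at[of f a b u "{}"]
    by (auto intro: continuous_at_imp_continuous_at_within)
  moreover have "at u within {a..b} = at u"
    using assms(2) by (intro at_within_interior) auto
  ultimately show ?thesis
    by (simp add: has_real_derivative_iff_has_vector_derivative)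
qed

text \<open>Nonnegativity of the kernel is only required away from \<open>0\<close>: the kernels below involve
  \<open>ln s\<close>, whose value at \<open>s = 0\<close> is the junk value \<open>ln 0 = 0\<close>.\<close>
lemma kernel_mult_integrable:
  fixes K \<phi> :: "real \<Rightarrow> real"
  assumes K: "(K has_integral I) {0..t}" and K_nonneg: "\<And>s. s \<in> {0<..t} \<Longrightarrow> 0 \<le> K s"
    and \<phi>: "continuous_on {0..t} \<phi>"
  shows "(\<lambda>s. K s * \<phi> s) integrable_on {0..t}"
proof -
  define K' where "K' s = (if s = 0 then 0 else K s)" for s
  have "(K' has_integral I) {0..t}"
    by (rule has_integral_spike[of "{0}", OF _ _ K]) (auto simp: K'_def)
  then have "K' absolutely_integrable_on {0..t}"
    using K_nonneg by (intro nonnegative_absolutely_integrable_1) (auto simp: K'_def has_integral_integrable)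
  moreover have "\<phi> \<in> borel_measurable (lebesgue_on {0..t})"
    by (rule continuous_imp_measurable_on_sets_lebesgue[OF \<phi>]) simp
  moreover have "bounded (\<phi> ` {0..t})"
    by (intro compact_imp_bounded compact_continuous_image[OF \<phi>]) simp
  ultimately have "(\<lambda>s. \<phi> s * K' s) absolutely_integrable_on {0..t}"
    by (intro absolutely_integrable_bounded_measurable_product_real) auto
  then have "(\<lambda>s. K' s * \<phi> s) integrable_on {0..t}"
    by (simp add: mult.commute set_lebesgue_integral_eq_integral(1))
  then show ?thesis
    by (rule integrable_spike[where S = "{0}"]) (auto simp: K'_def)
qed

lemma abs_integral_kernel_mult_le:
  fixes K \<phi> :: "real \<Rightarrow> real"
  assumes K: "(K has_integral I) {0..t}" and K_nonneg: "\<And>s. s \<in> {0<..t} \<Longrightarrow> 0 \<le> K s"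
    and \<phi>: "continuous_on {0..t} \<phi>" and bound: "\<And>s. s \<in> {0..t} \<Longrightarrow> \<bar>\<phi> s\<bar> \<le> B"
  shows "\<bar>integral {0..t} (\<lambda>s. K s * \<phi> s)\<bar> \<le> B * I"
proof -
  define K' where "K' s = (if s = 0 then 0 else K s)" for s
  have K': "(K' has_integral I) {0..t}"
    by (rule has_integral_spike[of "{0}", OF _ _ K]) (auto simp: K'_def)
  have K'_nonneg: "0 \<le> K' s" if "s \<in> {0..t}" for s
    using that K_nonneg by (auto simp: K'_def)
  have "integral {0..t} (\<lambda>s. K s * \<phi> s) = integral {0..t} (\<lambda>s. K' s * \<phi> s)"
    by (rule integral_spike[of "{0}"]) (auto simp: K'_def)
  also have "\<bar>\<dots>\<bar> \<le> integral {0..t} (\<lambda>s. B * K' s)"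
  proof (rule integral_norm_bound_integral[where 'a = real, unfolded real_norm_def])
    show "(\<lambda>s. K' s * \<phi> s) integrable_on {0..t}"
      by (rule kernel_mult_integrable[OF K' K'_nonneg \<phi>]) simp
    show "(\<lambda>s. B * K' s) integrable_on {0..t}"
      using has_integral_mult_right[OF K'] by blast
    fix s assume "s \<in> {0..t}"
    with K'_nonneg[of s] bound[of s] show "\<bar>K' s * \<phi> s\<bar> \<le> B * K' s"
      by (simp add: abs_mult mult.commute[of B] mult_left_mono)
  qed
  also have "\<dots> = B * I"
    using has_integral_mult_right[OF K'] by (rule integral_unique)
  finally show ?thesis .
qed

lemma harm_le_1_plus_ln: "1 \<le> N \<Longrightarrow> harm N \<le> 1 + ln (real N)"
  using euler_mascheroni_sequence_decreasing[of 1 N] by (simp add: harm_def)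

lemma alternating_geometric_sum:
  fixes s :: real
  assumes "a < N" "r \<le> 2 * a"
  shows "(\<Sum>m\<in>{a<..<N}. (-1) ^ m * s ^ (2 * m - r - 2)) =
           - ((-1) ^ a * s ^ (2 * a - r) + (-1) ^ N * s ^ (2 * N - r - 2)) / (1 + s ^ 2)"
proof -
  have "(1 + s ^ 2) * (\<Sum>m\<in>{a<..<N}. (-1) ^ m * s ^ (2 * m - r - 2)) =
          - ((-1) ^ a * s ^ (2 * a - r) + (-1) ^ N * s ^ (2 * N - r - 2))"
    using Suc_leI[OF assms(1)]
  proof (induction N rule: dec_induct)
    case base
    have "{a<..<Suc a} = {}"
      by auto
    with assms show ?case
      by simp
  next
    case (step N)
    have "{a<..<Suc N} = insert N {a<..<N}"
      using step by auto
    moreover have "2 * Suc N - r - 2 = (2 * N - r - 2) + 2"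
      using step assms by simp
    ultimately show ?case
      using step.IH by (simp add: distrib_left power_add power2_eq_square algebra_simps)
  qed
  then show ?thesis
    by (simp add: field_simps)
qed

lemma length_le_sum_list: "\<forall>x\<in>set xs. (0::nat) < x \<Longrightarrow> length xs \<le> sum_list xs"
  by (induction xs) auto

lemma arctan_one_minus_div_one_plus:
  assumes "-1 < t"
  shows "arctan ((1 - t) / (1 + t)) = pi / 4 - arctan t"
proof (rule arctan_unique)
  have "arctan (-1) < arctan t"
    using assms by (simp only: arctan_less_iff)
  then show lower: "- (pi / 2) < pi / 4 - arctan t" and upper: "pi / 4 - arctan t < pi / 2"
    using arctan_ubound[of t] by (simp_all add: arctan_minus arctan_one)
  have "cos (pi / 4 - arctan t) \<noteq> 0"
    using cos_gt_zero_pi[OF lower upper] by simp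
  then show "tan (pi / 4 - arctan t) = (1 - t) / (1 + t)"
    by (simp add: tan_diff[OF _ cos_arctan_not_zero] tan_45 cos_45 tan_arctan)
qed

text \<open>Unlike \<open>has_integral_substitution\<close>, this change of variables allows \<open>F\<close> to be unbounded
  at the endpoints.\<close>
lemma has_integral_reflect_one_minus_div_one_plus:
  fixes F :: "real \<Rightarrow> real"
  assumes F: "F integrable_on {0..1}" and cont: "\<And>u. u \<in> {0<..<1} \<Longrightarrow> isCont F u"
  shows "((\<lambda>t. F ((1 - t) / (1 + t)) * (2 / (1 + t) ^ 2)) has_integral integral {0..1} F) {0..1}"
proof -
  define \<Phi> where "\<Phi> x = integral {0..x} F" for x
  have maps: "(1 - t) / (1 + t) \<in> {0..1}" if "t \<in> {0..1}" for t :: real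
    using that by (auto simp: divide_simps)
  have "((\<lambda>t. F ((1 - t) / (1 + t)) * (2 / (1 + t) ^ 2)) has_integral
          - \<Phi> ((1 - 1) / (1 + 1)) - - \<Phi> ((1 - 0) / (1 + 0))) {0..1}"
  proof (rule fundamental_theorem_of_calculus_interior)
    show "continuous_on {0..1} (\<lambda>t. - \<Phi> ((1 - t) / (1 + t)))"
      unfolding \<Phi>_def
      by (intro continuous_intros continuous_on_compose2[OF indefinite_integral_continuous_1[OF F]])
        (use maps in auto)
    fix t :: real assume t: "t \<in> {0<..<1}"
    then have u: "(1 - t) / (1 + t) \<in> {0<..<1}"
      by (auto simp: divide_simps)
    have "((\<lambda>t. (1 - t) / (1 + t)) has_real_derivative - 2 / (1 + t) ^ 2) (at t)"
      using t by (auto intro!: derivative_eq_intros simp: field_simps power2_eq_square)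
    from DERIV_chain2[OF has_real_derivative_indefinite_integral[OF F u cont[OF u]] this]
    have "((\<lambda>t. - \<Phi> ((1 - t) / (1 + t))) has_real_derivative
            - (F ((1 - t) / (1 + t)) * (- 2 / (1 + t) ^ 2))) (at t)"
      unfolding \<Phi>_def by (rule DERIV_minus)
    then show "((\<lambda>t. - \<Phi> ((1 - t) / (1 + t))) has_vector_derivative
                 F ((1 - t) / (1 + t)) * (2 / (1 + t) ^ 2)) (at t)"
      by (simp add: has_real_derivative_iff_has_vector_derivative)
  qed simp
  then show ?thesis
    by (simp add: \<Phi>_def)
qed

section \<open>The logarithmic kernel\<close>

definition log_kernel :: "real \<Rightarrow> nat \<Rightarrow> real \<Rightarrow> real" where
  "log_kernel t j s = (ln t - ln s) ^ j / fact j"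

lemma log_kernel_0 [simp]: "log_kernel t 0 s = 1"
  by (simp add: log_kernel_def)

lemma log_kernel_Suc_self [simp]: "log_kernel t (Suc j) t = 0"
  by (simp add: log_kernel_def)

lemma log_kernel_nonneg: "0 < s \<Longrightarrow> s \<le> t \<Longrightarrow> 0 \<le> log_kernel t j s"
  unfolding log_kernel_def by (intro divide_nonneg_pos zero_le_power) auto

lemma has_real_derivative_log_kernel:
  assumes "0 < s"
  shows "(log_kernel t (Suc j) has_real_derivative - log_kernel t j s / s) (at s)"
proof -
  have "((\<lambda>s. ln t - ln s) has_real_derivative - 1 / s) (at s)"
    using assms by (auto intro!: derivative_eq_intros)
  from has_real_derivative_power_div_fact[OF this, of j] show ?thesis
    unfolding log_kernel_def[abs_def] by simp
qed

lemma has_real_derivative_log_kernel_1: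
  assumes "0 < u"
  shows "(log_kernel 1 a has_real_derivative (if a = 0 then 0 else - log_kernel 1 (a - 1) u / u)) (at u)"
proof (cases a)
  case 0
  have "log_kernel 1 0 = (\<lambda>_. 1)"
    by (simp add: fun_eq_iff)
  with 0 show ?thesis
    by simp
next
  case (Suc j)
  with has_real_derivative_log_kernel[OF assms, of 1 j] show ?thesis
    by simp
qed

lemma has_real_derivative_log_kernel_upper:
  assumes "0 < t"
  shows "((\<lambda>t. log_kernel t (Suc j) c) has_real_derivative log_kernel t j c / t) (at t)"
proof -
  have "((\<lambda>t. ln t - ln c) has_real_derivative 1 / t) (at t)"
    using assms by (auto intro!: derivative_eq_intros)
  from has_real_derivative_power_div_fact[OF this, of j] show ?thesis
    unfolding log_kernel_def by simp
qed

lemma has_real_derivative_log_kernel_upper_1: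
  "0 < t \<Longrightarrow> ((\<lambda>t. log_kernel t a 1) has_real_derivative
                 (if a = 0 then 0 else log_kernel t (a - 1) 1 / t)) (at t)"
  by (cases a) (auto simp: has_real_derivative_log_kernel_upper)

lemma tendsto_power_mult_log_kernel:
  assumes "1 \<le> x"
  shows "((\<lambda>s. s ^ x * log_kernel t j s) \<longlongrightarrow> 0) (at_right 0)"
proof -
  have "((\<lambda>s::real. s * (ln t - ln s) ^ j) \<longlongrightarrow> 0) (at_right 0)"
    by real_asymp
  from tendsto_divide[OF this tendsto_const[of "fact j"]]
  have lim: "((\<lambda>s. s * log_kernel t j s) \<longlongrightarrow> 0) (at_right 0)"
    by (simp add: log_kernel_def)
  have "\<forall>\<^sub>F s in at_right 0. (0::real) < s \<and> s < 1"
    by (rule eventually_at_rightI[of 0 1]) auto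
  then have "\<forall>\<^sub>F s in at_right 0. norm (s ^ x * log_kernel t j s) \<le> norm (s * log_kernel t j s)"
  proof eventually_elim
    case (elim s)
    have "s ^ x \<le> s ^ 1"
      using elim assms by (intro power_decreasing) auto
    then show ?case
      using elim by (simp add: abs_mult mult_right_mono)
  qed
  then show ?thesis
    by (rule Lim_null_comparison[OF _ tendsto_norm_zero[OF lim]])
qed

lemma continuous_on_power_mult_log_kernel:
  assumes "1 \<le> x"
  shows "continuous_on {0..t} (\<lambda>s. s ^ x * log_kernel t j s)"
proof (rule continuous_on_eq_continuous_within[THEN iffD2], intro ballI)
  fix s assume s: "s \<in> {0..t}"
  show "continuous (at s within {0..t}) (\<lambda>s. s ^ x * log_kernel t j s)"
  proof (cases "s = 0")
    case True
    have "((\<lambda>s. s ^ x * log_kernel t j s) \<longlongrightarrow> 0) (at 0 within {0..t})"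
    proof (cases "t = 0")
      case False
      with s True have "at (0::real) within {0..t} = at_right 0"
        by (simp add: at_within_Icc_at_right)
      with tendsto_power_mult_log_kernel[OF assms] show ?thesis
        by simp
    qed (simp add: at_within_def)
    with True assms show ?thesis
      by (simp add: continuous_within power_0_left)
  next
    case False
    with s have "isCont (\<lambda>s. s ^ x * log_kernel t j s) s"
      unfolding log_kernel_def by (auto intro!: continuous_intros)
    then show ?thesis
      using continuous_at_imp_continuous_at_within by blast
  qed
qed

lemma continuous_on_log_kernel_mult:
  assumes f: "continuous_on {0..1} f" and lin: "\<And>s. s \<in> {0..1} \<Longrightarrow> \<bar>f s\<bar> \<le> C * s"
  shows "continuous_on {0..1} (\<lambda>t. log_kernel 1 a t * f t)"
proof (rule continuous_on_eq_continuous_within[THEN iffD2], intro ballI)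
  fix s :: real assume s: "s \<in> {0..1}"
  have f_s: "continuous (at s within {0..1}) f"
    using f s by (simp add: continuous_on_eq_continuous_within)
  show "continuous (at s within {0..1}) (\<lambda>t. log_kernel 1 a t * f t)"
  proof (cases "s = 0")
    case False
    with s have "isCont (log_kernel 1 a) s"
      unfolding log_kernel_def by (auto intro!: continuous_intros)
    then have "continuous (at s within {0..1}) (log_kernel 1 a)"
      by (rule continuous_at_imp_continuous_at_within)
    from continuous_mult[OF this f_s] show ?thesis .
  next
    case True
    have "\<forall>\<^sub>F s in at_right 0. (0::real) < s \<and> s < 1"
      by (rule eventually_at_rightI[of 0 1]) auto
    then have "\<forall>\<^sub>F s in at_right 0. norm (log_kernel 1 a s * f s) \<le> C * norm (s ^ 1 * log_kernel 1 a s)"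
    proof eventually_elim
      case (elim s)
      then have "\<bar>log_kernel 1 a s\<bar> * \<bar>f s\<bar> \<le> \<bar>log_kernel 1 a s\<bar> * (C * s)"
        using lin by (intro mult_left_mono) auto
      with elim show ?case
        by (simp add: abs_mult mult_ac)
    qed
    moreover have "((\<lambda>s. C * norm (s ^ 1 * log_kernel 1 a s)) \<longlongrightarrow> 0) (at_right 0)"
      using tendsto_mult_right_zero[OF tendsto_norm_zero[OF tendsto_power_mult_log_kernel[of 1 1 a]]]
      by simp
    ultimately have "((\<lambda>s. log_kernel 1 a s * f s) \<longlongrightarrow> 0) (at_right 0)"
      by (rule Lim_null_comparison)
    moreover have "at (0::real) within {0..1} = at_right 0"
      by (simp add: at_within_Icc_at_right)
    moreover have "f 0 = 0"
      using lin[of 0] by simp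
    ultimately show ?thesis
      unfolding True continuous_within by simp
  qed
qed

lemma has_integral_power_mult_log_kernel:
  assumes "1 \<le> x" "0 \<le> t"
  shows "((\<lambda>s. s ^ (x - 1) * log_kernel t j s) has_integral t ^ x / real x ^ Suc j) {0..t}"
proof (induction j)
  case 0
  have "((\<lambda>s. s ^ (x - 1)) has_integral t ^ x / real x - 0 ^ x / real x) {0..t}"
  proof (rule fundamental_theorem_of_calculus_interior)
    fix s :: real
    have "((\<lambda>s. s ^ x / real x) has_real_derivative real x * s ^ (x - 1) / real x) (at s)"
      by (auto intro!: derivative_eq_intros)
    then show "((\<lambda>s. s ^ x / real x) has_vector_derivative s ^ (x - 1)) (at s)"
      using assms by (simp add: has_real_derivative_iff_has_vector_derivative)
  qed (use assms in \<open>auto intro!: continuous_intros\<close>)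
  with assms show ?case
    by (simp add: power_0_left)
next
  case (Suc j)
  define F where "F s = s ^ x * log_kernel t (Suc j) s / real x" for s
  have x: "real x > 0"
    using assms by simp
  have "((\<lambda>s. s ^ (x - 1) * log_kernel t (Suc j) s - s ^ (x - 1) * log_kernel t j s / real x)
          has_integral F t - F 0) {0..t}"
  proof (rule fundamental_theorem_of_calculus_interior)
    show "continuous_on {0..t} F"
      unfolding F_def using assms by (intro continuous_intros continuous_on_power_mult_log_kernel) auto
    fix s assume s: "s \<in> {0<..<t}"
    have "(F has_real_derivative
            (real x * s ^ (x - 1) * log_kernel t (Suc j) s + s ^ x * (- log_kernel t j s / s)) / real x) (at s)"
      unfolding F_def using s x by (auto intro!: derivative_eq_intros has_real_derivative_log_kernel)
    moreover have "s ^ x = s * s ^ (x - 1)"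
      using assms by (cases x) auto
    ultimately show "(F has_vector_derivative
            s ^ (x - 1) * log_kernel t (Suc j) s - s ^ (x - 1) * log_kernel t j s / real x) (at s)"
      using s x by (simp add: has_real_derivative_iff_has_vector_derivative field_simps)
  qed (use assms in auto)
  moreover have "F t = 0" "F 0 = 0"
    unfolding F_def using assms by auto
  ultimately have "((\<lambda>s. s ^ (x - 1) * log_kernel t (Suc j) s - s ^ (x - 1) * log_kernel t j s / real x)
                    has_integral 0) {0..t}"
    by simp
  from has_integral_add[OF this has_integral_divide[OF Suc, of "real x"]] show ?case
    by (simp add: field_simps)
qed

lemma has_integral_log_kernel: "0 \<le> t \<Longrightarrow> (log_kernel t j has_integral t) {0..t}"
  using has_integral_power_mult_log_kernel[of 1 t j] by simp

lemma abs_integral_power_mult_log_kernel_le: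
  assumes x: "1 \<le> x" and t: "t \<in> {0..1}"
  shows "\<bar>integral {0..t} (\<lambda>s. s ^ (x - 1) * log_kernel t j s * (c / (1 + s ^ 2)))\<bar> \<le> \<bar>c\<bar> / real x"
proof -
  have "\<bar>integral {0..t} (\<lambda>s. s ^ (x - 1) * log_kernel t j s * (c / (1 + s ^ 2)))\<bar>
          \<le> \<bar>c\<bar> * (t ^ x / real x ^ Suc j)"
  proof (rule abs_integral_kernel_mult_le)
    show "((\<lambda>s. s ^ (x - 1) * log_kernel t j s) has_integral t ^ x / real x ^ Suc j) {0..t}"
      using has_integral_power_mult_log_kernel[OF x] t by simp
    fix s assume "s \<in> {0..t}"
    have "\<bar>c\<bar> / (1 + s ^ 2) \<le> \<bar>c\<bar> / 1"
      by (intro divide_left_mono) auto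
    then show "\<bar>c / (1 + s ^ 2)\<bar> \<le> \<bar>c\<bar>"
      by (simp add: abs_divide)
  qed (use log_kernel_nonneg in \<open>auto intro!: continuous_intros\<close>)
  also have "t ^ x / real x ^ Suc j \<le> 1 / real x"
  proof (rule frac_le)
    show "t ^ x \<le> 1"
      using t by (simp add: power_le_one)
    show "real x \<le> real x ^ Suc j"
      using x by (intro self_le_power) auto
  qed (use x in auto)
  then have "\<bar>c\<bar> * (t ^ x / real x ^ Suc j) \<le> \<bar>c\<bar> / real x"
    using mult_left_mono[of _ _ "\<bar>c\<bar>"] by fastforce
  finally show ?thesis .
qed

lemma log_kernel_binomial: "log_kernel t j s = (\<Sum>a\<le>j. log_kernel t a 1 * log_kernel 1 (j - a) s)"
proof -
  have "log_kernel t j s = (\<Sum>a\<le>j. of_nat (j choose a) * ln t ^ a * (- ln s) ^ (j - a) / fact j)"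
    using binomial_ring[of "ln t" "- ln s" j] by (simp add: log_kernel_def sum_divide_distrib)
  also have "\<dots> = (\<Sum>a\<le>j. log_kernel t a 1 * log_kernel 1 (j - a) s)"
    by (intro sum.cong refl) (simp add: log_kernel_def binomial_fact)
  finally show ?thesis .
qed

lemma log_kernel_binomial_self:
  "(\<Sum>a\<le>j. log_kernel u a 1 * log_kernel 1 (j - a) u) = (if j = 0 then 1 else 0)"
  using log_kernel_binomial[of u j u] by (cases j) simp_all

lemma integrable_log_kernel_mult:
  assumes "t \<in> {0..1}" "continuous_on {0..1} \<psi>"
  shows "(\<lambda>s. log_kernel 1 b s * \<psi> s) integrable_on {0..t}"
proof (rule integrable_on_subinterval)
  show "(\<lambda>s. log_kernel 1 b s * \<psi> s) integrable_on {0..1}"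
    using assms log_kernel_nonneg by (intro kernel_mult_integrable[OF has_integral_log_kernel]) auto
qed (use assms in auto)

lemma integral_log_kernel_binomial:
  assumes "t \<in> {0..1}" "continuous_on {0..1} \<psi>"
  shows "integral {0..t} (\<lambda>s. log_kernel t j s * \<psi> s) =
           (\<Sum>a\<le>j. log_kernel t a 1 * integral {0..t} (\<lambda>s. log_kernel 1 (j - a) s * \<psi> s))"
proof -
  have "integral {0..t} (\<lambda>s. log_kernel t j s * \<psi> s) =
          integral {0..t} (\<lambda>s. \<Sum>a\<le>j. log_kernel t a 1 * (log_kernel 1 (j - a) s * \<psi> s))"
    by (simp add: log_kernel_binomial[of t j] sum_distrib_left sum_distrib_right mult_ac)
  also have "\<dots> = (\<Sum>a\<le>j. integral {0..t} (\<lambda>s. log_kernel t a 1 * (log_kernel 1 (j - a) s * \<psi> s)))"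
    using integrable_log_kernel_mult[OF assms] by (intro integral_sum integrable_on_mult_right) auto
  finally show ?thesis
    by simp
qed

lemma has_real_derivative_integral_log_kernel:
  assumes \<psi>: "continuous_on {0..1} \<psi>" and u: "u \<in> {0<..<1}"
  shows "((\<lambda>t. integral {0..t} (\<lambda>s. log_kernel t (Suc j) s * \<psi> s)) has_real_derivative
           integral {0..u} (\<lambda>s. log_kernel u j s * \<psi> s) / u) (at u)"
proof -
  define J where "J b t = integral {0..t} (\<lambda>s. log_kernel 1 b s * \<psi> s)" for b t
  have J: "(J b has_real_derivative log_kernel 1 b u * \<psi> u) (at u)" for b
  proof -
    have "isCont \<psi> u"
      using \<psi> u by (intro continuous_on_interior[of "{0..1}"]) auto
    with u have "isCont (\<lambda>s. log_kernel 1 b s * \<psi> s) u"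
      unfolding log_kernel_def by (auto intro!: continuous_intros)
    with u integrable_log_kernel_mult[of 1 \<psi> b] \<psi> show ?thesis
      unfolding J_def by (intro has_real_derivative_indefinite_integral[of _ 0 1]) auto
  qed
  have "((\<lambda>t. \<Sum>a\<le>Suc j. log_kernel t a 1 * J (Suc j - a) t) has_real_derivative
          (\<Sum>a\<le>Suc j. (if a = 0 then 0 else log_kernel u (a - 1) 1 / u) * J (Suc j - a) u
                        + log_kernel 1 (Suc j - a) u * \<psi> u * log_kernel u a 1)) (at u)"
    using u by (intro DERIV_sum DERIV_mult has_real_derivative_log_kernel_upper_1 J) auto
  also have "(\<Sum>a\<le>Suc j. (if a = 0 then 0 else log_kernel u (a - 1) 1 / u) * J (Suc j - a) u
                        + log_kernel 1 (Suc j - a) u * \<psi> u * log_kernel u a 1) =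
             (\<Sum>a\<le>j. log_kernel u a 1 * J (j - a) u) / u
               + (\<Sum>a\<le>Suc j. log_kernel u a 1 * log_kernel 1 (Suc j - a) u) * \<psi> u"
  proof -
    have "(\<Sum>a\<le>Suc j. (if a = 0 then 0 else log_kernel u (a - 1) 1 / u) * J (Suc j - a) u) =
            (\<Sum>a\<le>j. log_kernel u a 1 * J (j - a) u) / u"
      by (subst sum.atMost_Suc_shift) (simp add: sum_divide_distrib)
    then show ?thesis
      unfolding sum.distrib by (simp add: sum_distrib_left sum_distrib_right mult_ac del: sum.atMost_Suc)
  qed
  also have "\<dots> = integral {0..u} (\<lambda>s. log_kernel u j s * \<psi> s) / u"
    unfolding J_def log_kernel_binomial_self using u \<psi> by (simp add: integral_log_kernel_binomial)
  finally show ?thesis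
  proof (rule has_field_derivative_transform_within_open[of _ _ _ "{0<..<1}"])
    fix t :: real assume "t \<in> {0<..<1}"
    with \<psi> show "(\<Sum>a\<le>Suc j. log_kernel t a 1 * J (Suc j - a) t) =
                  integral {0..t} (\<lambda>s. log_kernel t (Suc j) s * \<psi> s)"
      unfolding J_def by (simp add: integral_log_kernel_binomial)
  qed (use u in auto)
qed

text \<open>The substitution \<open>s = (1 - t) / (1 + t)\<close> exchanges \<open>arctan s\<close> with \<open>\<pi>/4 - arctan t\<close>
  and preserves the measure \<open>ds / (1 + s\<^sup>2)\<close> up to orientation.\<close>
lemma integral_log_kernel_arctan:
  fixes h :: "real \<Rightarrow> real"
  assumes h: "continuous_on UNIV h"
  shows "integral {0..1} (\<lambda>s. log_kernel 1 j s * (h (arctan s) / (1 + s ^ 2))) =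
           (-1) ^ j / fact j *
           integral {0..1} (\<lambda>t. ln ((1 - t) / (1 + t)) ^ j * h (pi / 4 - arctan t) / (1 + t ^ 2))"
proof -
  define F where "F s = log_kernel 1 j s * (h (arctan s) / (1 + s ^ 2))" for s
  have "F integrable_on {0..1}"
    unfolding F_def using log_kernel_nonneg
    by (intro kernel_mult_integrable[OF has_integral_log_kernel])
       (auto intro!: continuous_intros continuous_on_compose2[OF h])
  moreover have "isCont F u" if "u \<in> {0<..<1}" for u
    unfolding F_def log_kernel_def using that h
    by (auto intro!: continuous_intros continuous_at_compose[of u arctan h, unfolded comp_def]
             simp: continuous_on_eq_continuous_at)
  ultimately have "((\<lambda>t. F ((1 - t) / (1 + t)) * (2 / (1 + t) ^ 2)) has_integral integral {0..1} F) {0..1}"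
    by (rule has_integral_reflect_one_minus_div_one_plus)
  moreover have "F ((1 - t) / (1 + t)) * (2 / (1 + t) ^ 2) =
      (-1) ^ j / fact j * (ln ((1 - t) / (1 + t)) ^ j * h (pi / 4 - arctan t) / (1 + t ^ 2))"
    if "t \<in> {0..1}" for t
  proof -
    define u where "u = (1 - t) / (1 + t)"
    have "1 + t \<noteq> 0"
      using that by simp
    then have "1 + u ^ 2 = 2 * (1 + t ^ 2) / (1 + t) ^ 2"
      unfolding u_def by (simp add: field_simps) (simp add: power2_eq_square algebra_simps)
    then have "1 / (1 + u ^ 2) * (2 / (1 + t) ^ 2) = 1 / (1 + t ^ 2)"
      using \<open>1 + t \<noteq> 0\<close> by (simp add: divide_simps) (use one_add_power2_pos[of t] in linarith)
    then have "F u * (2 / (1 + t) ^ 2) = log_kernel 1 j u * h (arctan u) / (1 + t ^ 2)"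
      unfolding F_def by (metis (no_types, lifting) times_divide_eq_right mult.assoc mult.right_neutral)
    also have "log_kernel 1 j u = (-1) ^ j / fact j * ln u ^ j"
      by (simp add: log_kernel_def power_minus')
    also have "arctan u = pi / 4 - arctan t"
      unfolding u_def using that by (intro arctan_one_minus_div_one_plus) simp
    finally show ?thesis
      unfolding u_def by simp
  qed
  ultimately have "((\<lambda>t. (-1) ^ j / fact j * (ln ((1 - t) / (1 + t)) ^ j * h (pi / 4 - arctan t) / (1 + t ^ 2)))
                    has_integral integral {0..1} F) {0..1}"
    by (rule has_integral_eq[rotated]) simp
  from integral_unique[OF has_integral_mult_right[OF this, of "(-1) ^ j * fact j"]]
  show ?thesis
    unfolding F_def by simp
qed

section \<open>Truncated generating functions\<close>

definition top_index :: "nat list \<Rightarrow> nat" where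
  "top_index ns = (if ns = [] then 0 else last ns)"

definition Tbar_denom :: "nat list \<Rightarrow> nat list \<Rightarrow> real" where
  "Tbar_denom ks ns = (\<Prod>j<length ks. (2 * real (ns ! j) - real (j + 1)) ^ (ks ! j))"

lemma finite_idx_set: "finite (idx_set r N)"
proof (rule finite_subset)
  show "idx_set r N \<subseteq> {ns. set ns \<subseteq> {0..<N} \<and> length ns = r}"
    unfolding idx_set_def by auto
qed (simp add: finite_lists_length_eq)

lemma idx_set_0: "idx_set 0 N = {[]}"
  unfolding idx_set_def by auto

lemma idx_set_length: "ns \<in> idx_set r N \<Longrightarrow> length ns = r"
  unfolding idx_set_def by simp

lemma idx_set_nth_ge:
  assumes "ns \<in> idx_set r N" "j < length ns"
  shows "j + 1 \<le> ns ! j"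
  using assms(2)
proof (induction j)
  case 0
  with assms(1) show ?case
    unfolding idx_set_def by (auto simp: Suc_le_eq)
next
  case (Suc j)
  with assms(1) have "ns ! j < ns ! Suc j"
    unfolding idx_set_def by (auto simp: sorted_wrt_iff_nth_less)
  with Suc show ?case
    by simp
qed

lemma top_index_ge:
  assumes "ns \<in> idx_set r N"
  shows "r \<le> top_index ns"
proof (cases "ns = []")
  case False
  with idx_set_length[OF assms] idx_set_nth_ge[OF assms, of "r - 1"] show ?thesis
    by (simp add: top_index_def last_conv_nth length_greater_0_conv[symmetric])
qed (use idx_set_length[OF assms] in simp)

lemma top_index_less: "ns \<in> idx_set r N \<Longrightarrow> 0 < N \<Longrightarrow> top_index ns < N"
  unfolding idx_set_def top_index_def by auto

lemma snoc_in_idx_set_iff: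
  "ns @ [m] \<in> idx_set (Suc r) N \<longleftrightarrow> ns \<in> idx_set r N \<and> top_index ns < m \<and> m < N"
proof -
  have "(\<forall>x\<in>set ns. x < m) \<longleftrightarrow> top_index ns < m" if "sorted_wrt (<) ns" "0 < m"
    using that by (cases ns rule: rev_cases) (auto simp: top_index_def sorted_wrt_append)
  then show ?thesis
    unfolding idx_set_def by (auto simp: sorted_wrt_append)
qed

lemma sum_idx_set_Suc:
  fixes f :: "nat list \<Rightarrow> real"
  shows "(\<Sum>ns\<in>idx_set (Suc r) N. f ns) =
           (\<Sum>ns\<in>idx_set r N. \<Sum>m\<in>{top_index ns<..<N}. f (ns @ [m]))"
proof -
  have "idx_set (Suc r) N = (\<lambda>(ns, m). ns @ [m]) ` (SIGMA ns:idx_set r N. {top_index ns<..<N})"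
  proof (intro set_eqI iffI)
    fix xs assume xs: "xs \<in> idx_set (Suc r) N"
    then obtain ns m where "xs = ns @ [m]"
      by (cases xs rule: rev_cases) (auto simp: idx_set_def)
    with xs snoc_in_idx_set_iff show "xs \<in> (\<lambda>(ns, m). ns @ [m]) ` (SIGMA ns:idx_set r N. {top_index ns<..<N})"
      by force
  qed (auto simp: snoc_in_idx_set_iff)
  moreover have "inj_on (\<lambda>(ns, m). ns @ [m]) (SIGMA ns:idx_set r N. {top_index ns<..<N})"
    by (auto simp: inj_on_def)
  ultimately have "(\<Sum>ns\<in>idx_set (Suc r) N. f ns) =
                    (\<Sum>(ns, m)\<in>(SIGMA ns:idx_set r N. {top_index ns<..<N}). f (ns @ [m]))"
    by (simp add: sum.reindex case_prod_unfold)
  then show ?thesis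
    by (simp add: sum.Sigma finite_idx_set)
qed

lemma Tbar_denom_snoc:
  "length ns = length ks \<Longrightarrow>
     Tbar_denom (ks @ [k]) (ns @ [m]) = Tbar_denom ks ns * (2 * real m - real (length ks + 1)) ^ k"
  unfolding Tbar_denom_def by (simp add: nth_append)

lemma Tbar_denom_ge_1:
  assumes "ns \<in> idx_set (length ks) N"
  shows "1 \<le> Tbar_denom ks ns"
  unfolding Tbar_denom_def
proof (intro prod_ge_1 ballI one_le_power)
  fix j assume "j \<in> {..<length ks}"
  with assms have "j + 1 \<le> ns ! j"
    by (intro idx_set_nth_ge) (auto simp: idx_set_length)
  then show "1 \<le> 2 * real (ns ! j) - real (j + 1)"
    by linarith
qed

lemma Tbar_denom_snoc_ge:
  assumes ns: "ns \<in> idx_set (length ks) N" and m: "top_index ns < m" and k: "1 \<le> k"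
  shows "Tbar_denom ks ns * real m \<le> Tbar_denom (ks @ [k]) (ns @ [m])"
proof -
  have "length ks + 1 \<le> m"
    using top_index_ge[OF ns] m by auto
  then have "real m \<le> 2 * real m - real (length ks + 1)" "1 \<le> 2 * real m - real (length ks + 1)"
    by auto
  moreover from this(2) have "2 * real m - real (length ks + 1) \<le> (2 * real m - real (length ks + 1)) ^ k"
    using k by (intro self_le_power) auto
  ultimately have "real m \<le> (2 * real m - real (length ks + 1)) ^ k"
    by linarith
  with Tbar_denom_ge_1[OF ns] show ?thesis
    by (simp add: Tbar_denom_snoc idx_set_length[OF ns])
qed

text \<open>At \<open>t = 1\<close> this is the \<open>N\<close>-th partial sum of \<open>Tbar ks\<close>; since \<open>top_index [] = 0\<close>,
  the empty tuple contributes \<open>1\<close>.\<close>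
definition Tbar_poly :: "nat \<Rightarrow> nat list \<Rightarrow> real \<Rightarrow> real" where
  "Tbar_poly N ks t = (\<Sum>ns\<in>idx_set (length ks) N.
     (-1) ^ top_index ns * t ^ (2 * top_index ns - length ks) / Tbar_denom ks ns)"

definition Tbar_abs_partial :: "nat \<Rightarrow> nat list \<Rightarrow> real" where
  "Tbar_abs_partial N ks = (\<Sum>ns\<in>idx_set (length ks) N. 1 / Tbar_denom ks ns)"

lemma Tbar_poly_Nil: "Tbar_poly N [] t = 1"
  by (simp add: Tbar_poly_def idx_set_0 Tbar_denom_def top_index_def)

lemma Tbar_abs_partial_Nil: "Tbar_abs_partial N [] = 1"
  by (simp add: Tbar_abs_partial_def idx_set_0 Tbar_denom_def)

lemma Tbar_abs_partial_nonneg: "0 \<le> Tbar_abs_partial N ks"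
  unfolding Tbar_abs_partial_def using Tbar_denom_ge_1
  by (intro sum_nonneg) (metis divide_nonneg_nonneg order.trans zero_le_one)

lemma continuous_on_Tbar_poly: "continuous_on A (Tbar_poly N ks)"
  unfolding Tbar_poly_def by (intro continuous_intros) (use Tbar_denom_ge_1 in force)

lemma Tbar_poly_1:
  assumes "ks \<noteq> []"
  shows "Tbar_poly N ks 1 = (\<Sum>ns\<in>idx_set (length ks) N. Tbar_term ks ns)"
  unfolding Tbar_poly_def Tbar_term_def Tbar_denom_def
proof (intro sum.cong refl)
  fix ns assume "ns \<in> idx_set (length ks) N"
  with assms have "ns \<noteq> []"
    using idx_set_length by fastforce
  then show "(-1) ^ top_index ns * 1 ^ (2 * top_index ns - length ks) /
               (\<Prod>j<length ks. (2 * real (ns ! j) - real (j + 1)) ^ ks ! j) =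
             (-1) ^ last ns / (\<Prod>j<length ks. (2 * real (ns ! j) - real (j + 1)) ^ ks ! j)"
    by (simp add: top_index_def)
qed

lemma Tbar_poly_snoc:
  "Tbar_poly N (ks @ [k]) t =
     (\<Sum>ns\<in>idx_set (length ks) N. \<Sum>m\<in>{top_index ns<..<N}.
        (-1) ^ m / Tbar_denom ks ns * (t ^ (2 * m - Suc (length ks)) / real (2 * m - Suc (length ks)) ^ k))"
  unfolding Tbar_poly_def length_append_singleton sum_idx_set_Suc
proof (intro sum.cong refl)
  fix ns m assume ns: "ns \<in> idx_set (length ks) N" and m: "m \<in> {top_index ns<..<N}"
  then have "Suc (length ks) \<le> m"
    using top_index_ge[OF ns] by auto
  then have "real (2 * m - Suc (length ks)) = 2 * real m - real (length ks + 1)"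
    by (simp add: of_nat_diff)
  with idx_set_length[OF ns] show "(-1) ^ top_index (ns @ [m]) * t ^ (2 * top_index (ns @ [m]) - Suc (length ks)) /
      Tbar_denom (ks @ [k]) (ns @ [m]) =
      (-1) ^ m / Tbar_denom ks ns * (t ^ (2 * m - Suc (length ks)) / real (2 * m - Suc (length ks)) ^ k)"
    by (simp add: top_index_def Tbar_denom_snoc)
qed

lemma sum_Tbar_poly_snoc_integrand:
  assumes "1 \<le> N"
  shows "(\<Sum>ns\<in>idx_set (length ks) N. \<Sum>m\<in>{top_index ns<..<N}.
            (-1) ^ m / Tbar_denom ks ns * (s ^ (2 * m - Suc (length ks) - 1) * c)) =
          c * (- (Tbar_poly N ks s + (-1) ^ N * s ^ (2 * N - length ks - 2) * Tbar_abs_partial N ks) / (1 + s ^ 2))"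
proof -
  define r where "r = length ks"
  have "(\<Sum>m\<in>{top_index ns<..<N}. (-1) ^ m / Tbar_denom ks ns * (s ^ (2 * m - Suc r - 1) * c)) =
          c * (- ((-1) ^ top_index ns * s ^ (2 * top_index ns - r) / Tbar_denom ks ns
            + (-1) ^ N * s ^ (2 * N - r - 2) * (1 / Tbar_denom ks ns)) / (1 + s ^ 2))"
    if ns: "ns \<in> idx_set r N" for ns
  proof -
    have "top_index ns < N" "r \<le> 2 * top_index ns"
      using top_index_less[OF ns] top_index_ge[OF ns] assms by auto
    have "(\<Sum>m\<in>{top_index ns<..<N}. (-1) ^ m / Tbar_denom ks ns * (s ^ (2 * m - Suc r - 1) * c)) =
            c / Tbar_denom ks ns * (\<Sum>m\<in>{top_index ns<..<N}. (-1) ^ m * s ^ (2 * m - r - 2))"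
      by (simp add: sum_distrib_left mult_ac)
    also have "\<dots> = c / Tbar_denom ks ns *
        (- ((-1) ^ top_index ns * s ^ (2 * top_index ns - r) + (-1) ^ N * s ^ (2 * N - r - 2)) / (1 + s ^ 2))"
      by (simp only: alternating_geometric_sum[OF \<open>top_index ns < N\<close> \<open>r \<le> 2 * top_index ns\<close>])
    finally show ?thesis
      by (simp add: divide_inverse algebra_simps)
  qed
  then have "(\<Sum>ns\<in>idx_set r N. \<Sum>m\<in>{top_index ns<..<N}.
          (-1) ^ m / Tbar_denom ks ns * (s ^ (2 * m - Suc r - 1) * c)) =
        (\<Sum>ns\<in>idx_set r N. c * (- ((-1) ^ top_index ns * s ^ (2 * top_index ns - r) / Tbar_denom ks ns
            + (-1) ^ N * s ^ (2 * N - r - 2) * (1 / Tbar_denom ks ns)) / (1 + s ^ 2)))"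
    by (intro sum.cong refl)
  also have "\<dots> = c * (- (Tbar_poly N ks s + (-1) ^ N * s ^ (2 * N - r - 2) * Tbar_abs_partial N ks) / (1 + s ^ 2))"
    unfolding Tbar_poly_def Tbar_abs_partial_def r_def[symmetric] sum_divide_distrib[symmetric]
      sum_distrib_left[symmetric] minus_divide_left
    using sum_distrib_left[of _ "\<lambda>ns. 1 / Tbar_denom ks ns" "idx_set r N"]
    by (simp add: sum_negf sum_subtractf sum.distrib sum_distrib_left[symmetric])
  finally show ?thesis
    unfolding r_def .
qed

lemma has_integral_Tbar_poly_snoc:
  assumes "1 \<le> k" "1 \<le> N" "0 \<le> t"
  shows "((\<lambda>s. log_kernel t (k - 1) s *
             (- (Tbar_poly N ks s + (-1) ^ N * s ^ (2 * N - length ks - 2) * Tbar_abs_partial N ks) / (1 + s ^ 2)))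
           has_integral Tbar_poly N (ks @ [k]) t) {0..t}"
proof -
  define r where "r = length ks"
  have "((\<lambda>s. \<Sum>ns\<in>idx_set r N. \<Sum>m\<in>{top_index ns<..<N}.
            (-1) ^ m / Tbar_denom ks ns * (s ^ (2 * m - Suc r - 1) * log_kernel t (k - 1) s))
          has_integral Tbar_poly N (ks @ [k]) t) {0..t}"
    unfolding Tbar_poly_snoc r_def[symmetric]
  proof (intro has_integral_sum finite_idx_set finite_greaterThanLessThan has_integral_mult_right)
    fix ns m assume "ns \<in> idx_set r N" "m \<in> {top_index ns<..<N}"
    then have "1 \<le> 2 * m - Suc r"
      using top_index_ge by fastforce
    with has_integral_power_mult_log_kernel[of "2 * m - Suc r" t "k - 1"] assms
    show "((\<lambda>s. s ^ (2 * m - Suc r - 1) * log_kernel t (k - 1) s) has_integral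
            t ^ (2 * m - Suc r) / real (2 * m - Suc r) ^ k) {0..t}"
      by simp
  qed
  then show ?thesis
    unfolding r_def sum_Tbar_poly_snoc_integrand[OF assms(2)] .
qed

lemma Tbar_abs_partial_le_harm:
  assumes "\<forall>k\<in>set ks. 1 \<le> k"
  shows "Tbar_abs_partial N ks \<le> harm N ^ length ks"
  using assms
proof (induction ks rule: rev_induct)
  case Nil
  then show ?case
    by (simp add: Tbar_abs_partial_Nil)
next
  case (snoc k ks)
  have "Tbar_abs_partial N (ks @ [k]) =
          (\<Sum>ns\<in>idx_set (length ks) N. \<Sum>m\<in>{top_index ns<..<N}. 1 / Tbar_denom (ks @ [k]) (ns @ [m]))"
    unfolding Tbar_abs_partial_def length_append_singleton sum_idx_set_Suc ..
  also have "\<dots> \<le> (\<Sum>ns\<in>idx_set (length ks) N. \<Sum>m\<in>{top_index ns<..<N}. 1 / Tbar_denom ks ns * (1 / real m))"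
  proof (intro sum_mono)
    fix ns m assume ns: "ns \<in> idx_set (length ks) N" and "m \<in> {top_index ns<..<N}"
    with snoc.prems have "Tbar_denom ks ns * real m \<le> Tbar_denom (ks @ [k]) (ns @ [m])"
      by (intro Tbar_denom_snoc_ge) auto
    moreover have "0 < Tbar_denom ks ns * real m"
      using Tbar_denom_ge_1[OF ns] \<open>m \<in> _\<close> by simp
    ultimately show "1 / Tbar_denom (ks @ [k]) (ns @ [m]) \<le> 1 / Tbar_denom ks ns * (1 / real m)"
      by (simp add: frac_le)
  qed
  also have "\<dots> \<le> (\<Sum>ns\<in>idx_set (length ks) N. 1 / Tbar_denom ks ns * harm N)"
  proof (intro sum_mono)
    fix ns assume "ns \<in> idx_set (length ks) N"
    then have D: "0 \<le> 1 / Tbar_denom ks ns"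
      using Tbar_denom_ge_1 by (metis divide_nonneg_nonneg order.trans zero_le_one)
    have "(\<Sum>m\<in>{top_index ns<..<N}. 1 / real m) \<le> (\<Sum>m\<in>{1..N}. 1 / real m)"
      by (intro sum_mono2) auto
    also have "\<dots> = harm N"
      by (simp add: harm_def inverse_eq_divide)
    finally show "(\<Sum>m\<in>{top_index ns<..<N}. 1 / Tbar_denom ks ns * (1 / real m)) \<le> 1 / Tbar_denom ks ns * harm N"
      using D by (simp only: sum_distrib_left[symmetric] mult_left_mono)
  qed
  also have "\<dots> = Tbar_abs_partial N ks * harm N"
    unfolding Tbar_abs_partial_def by (simp add: sum_distrib_right)
  also have "\<dots> \<le> harm N ^ length ks * harm N"
    using snoc by (intro mult_right_mono) (auto simp: harm_nonneg)
  finally show ?case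
    by (simp add: mult.commute)
qed

lemma Tbar_abs_partial_div_tendsto_0:
  assumes "\<forall>k\<in>set ks. 1 \<le> k"
  shows "(\<lambda>N. Tbar_abs_partial N ks / real (2 * N - length ks - 1)) \<longlonglongrightarrow> 0"
proof (rule Lim_null_comparison)
  define p where "p = length ks"
  show "(\<lambda>N::nat. (1 + ln (real N)) ^ p / (2 * real N - real p - 1)) \<longlonglongrightarrow> 0"
    by real_asymp
  show "\<forall>\<^sub>F N in sequentially. norm (Tbar_abs_partial N ks / real (2 * N - length ks - 1))
          \<le> (1 + ln (real N)) ^ p / (2 * real N - real p - 1)"
  proof (rule eventually_sequentiallyI[of "p + 1"])
    fix N assume N: "p + 1 \<le> N"
    have "Tbar_abs_partial N ks \<le> harm N ^ p"
      using Tbar_abs_partial_le_harm[OF assms] p_def by simp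
    also have "\<dots> \<le> (1 + ln (real N)) ^ p"
      using harm_le_1_plus_ln[of N] N by (intro power_mono) (auto simp: harm_nonneg)
    moreover have "real (2 * N - length ks - 1) = 2 * real N - real p - 1"
      using N by (simp add: p_def of_nat_diff)
    ultimately show "norm (Tbar_abs_partial N ks / real (2 * N - length ks - 1))
          \<le> (1 + ln (real N)) ^ p / (2 * real N - real p - 1)"
      using N Tbar_abs_partial_nonneg[of N ks] by (simp add: divide_right_mono)
  qed
qed

section \<open>The limit as an iterated integral\<close>

text \<open>The limit of \<open>Tbar_poly N ks\<close>, as an iterated integral; the recursion peels off the
  last index, hence the reversed list.\<close>
fun Tbar_fun_rev :: "nat list \<Rightarrow> real \<Rightarrow> real" where
  "Tbar_fun_rev [] t = 1"
| "Tbar_fun_rev (k # ks) t =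
     integral {0..t} (\<lambda>s. log_kernel t (k - 1) s * (- Tbar_fun_rev ks s / (1 + s ^ 2)))"

definition Tbar_fun :: "nat list \<Rightarrow> real \<Rightarrow> real" where
  "Tbar_fun ks = Tbar_fun_rev (rev ks)"

lemma Tbar_fun_Nil: "Tbar_fun [] t = 1"
  by (simp add: Tbar_fun_def)

lemma Tbar_fun_snoc:
  "Tbar_fun (ks @ [k]) t = integral {0..t} (\<lambda>s. log_kernel t (k - 1) s * (- Tbar_fun ks s / (1 + s ^ 2)))"
  by (simp add: Tbar_fun_def)

lemma abs_Tbar_poly_snoc_minus_Tbar_fun_le:
  assumes k: "1 \<le> k" and N: "length ks + 2 \<le> N" and t: "t \<in> {0..1}"
    and cont: "continuous_on {0..1} (Tbar_fun ks)"
    and close: "\<And>s. s \<in> {0..1} \<Longrightarrow> \<bar>Tbar_poly N ks s - Tbar_fun ks s\<bar> \<le> e"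
  shows "\<bar>Tbar_poly N (ks @ [k]) t - Tbar_fun (ks @ [k]) t\<bar>
           \<le> e * t + Tbar_abs_partial N ks / real (2 * N - length ks - 1)"
proof -
  define x where "x = 2 * N - length ks - 1"
  define Z where "Z = Tbar_abs_partial N ks"
  define K where "K = log_kernel t (k - 1)"
  define \<phi> where "\<phi> s = - (Tbar_poly N ks s - Tbar_fun ks s) / (1 + s ^ 2)" for s
  define \<psi> where "\<psi> s = - Tbar_fun ks s / (1 + s ^ 2)" for s
  define R where "R s = s ^ (x - 1) * K s * (- ((-1) ^ N * Z) / (1 + s ^ 2))" for s
  \<comment> \<open>the integrand of \<open>has_integral_Tbar_poly_snoc\<close> is \<open>K \<phi> + K \<psi> + R\<close>, where \<open>K \<psi>\<close> integrates
     to \<open>Tbar_fun (ks @ [k]) t\<close> and \<open>R\<close> comes from the tail of the geometric series\<close>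
  have x: "1 \<le> x" "x - 1 = 2 * N - length ks - 2"
    unfolding x_def using N by auto
  have K: "(K has_integral t) {0..t}" "\<And>s. s \<in> {0<..t} \<Longrightarrow> 0 \<le> K s"
    unfolding K_def using t has_integral_log_kernel log_kernel_nonneg by auto
  have cont_t: "continuous_on {0..t} (Tbar_fun ks)"
    using t by (intro continuous_on_subset[OF cont]) auto
  have \<phi>: "continuous_on {0..t} \<phi>" and \<psi>: "continuous_on {0..t} \<psi>"
    unfolding \<phi>_def \<psi>_def by (intro continuous_intros cont_t continuous_on_Tbar_poly; simp)+
  have \<phi>_le: "\<bar>\<phi> s\<bar> \<le> e" if "s \<in> {0..t}" for s
  proof -
    have "\<bar>\<phi> s\<bar> \<le> \<bar>Tbar_poly N ks s - Tbar_fun ks s\<bar> / 1"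
      unfolding \<phi>_def abs_divide abs_minus_cancel by (intro divide_left_mono) auto
    with close[of s] that t show ?thesis
      by auto
  qed
  have R: "R integrable_on {0..t}"
    unfolding R_def using x(1) t log_kernel_nonneg has_integral_power_mult_log_kernel[OF x(1)] K_def
    by (intro kernel_mult_integrable[where I = "t ^ x / real x ^ Suc (k - 1)"]) (auto intro!: continuous_intros)
  have "((\<lambda>s. K s * \<phi> s + K s * \<psi> s + R s) has_integral Tbar_poly N (ks @ [k]) t) {0..t}"
    using has_integral_Tbar_poly_snoc[OF k _, of N t ks] N t
    unfolding \<phi>_def \<psi>_def R_def K_def Z_def x(2) by (simp add: divide_inverse algebra_simps)
  moreover have "((\<lambda>s. K s * \<phi> s + K s * \<psi> s + R s) has_integral
      integral {0..t} (\<lambda>s. K s * \<phi> s) + Tbar_fun (ks @ [k]) t + integral {0..t} R) {0..t}"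
    unfolding Tbar_fun_snoc \<psi>_def[symmetric] K_def[symmetric]
    by (intro has_integral_add integrable_integral R kernel_mult_integrable[OF K \<phi>] kernel_mult_integrable[OF K \<psi>])
  ultimately have "Tbar_poly N (ks @ [k]) t - Tbar_fun (ks @ [k]) t =
      integral {0..t} (\<lambda>s. K s * \<phi> s) + integral {0..t} R"
    by (auto dest: has_integral_unique)
  moreover have "\<bar>integral {0..t} (\<lambda>s. K s * \<phi> s)\<bar> \<le> e * t"
    by (rule abs_integral_kernel_mult_le[OF K \<phi> \<phi>_le])
  moreover have "\<bar>integral {0..t} R\<bar> \<le> Z / real x"
    using abs_integral_power_mult_log_kernel_le[OF x(1) t, of "k - 1" "- ((-1) ^ N * Z)"]
      Tbar_abs_partial_nonneg[of N ks] unfolding R_def K_def Z_def by (simp add: abs_mult)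
  ultimately show ?thesis
    unfolding Z_def x_def by (smt (verit) abs_triangle_ineq)
qed

theorem uniform_limit_Tbar_poly:
  assumes "\<forall>k\<in>set ks. 1 \<le> k"
  shows "uniform_limit {0..1} (\<lambda>N. Tbar_poly N ks) (Tbar_fun ks) sequentially"
  using assms
proof (induction ks rule: rev_induct)
  case Nil
  then show ?case
    by (simp add: Tbar_poly_Nil Tbar_fun_Nil uniform_limit_sequentially_iff)
next
  case (snoc k ks)
  then have k: "1 \<le> k" and ks: "\<forall>k\<in>set ks. 1 \<le> k"
    and lim: "uniform_limit {0..1} (\<lambda>N. Tbar_poly N ks) (Tbar_fun ks) sequentially"
    by auto
  have cont: "continuous_on {0..1} (Tbar_fun ks)"
    by (rule uniform_limit_theorem[OF _ lim]) (auto simp: continuous_on_Tbar_poly)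
  show ?case
    unfolding uniform_limit_sequentially_iff
  proof (intro allI impI)
    fix e :: real assume "0 < e"
    then obtain M\<^sub>1 where M\<^sub>1: "\<And>N s. M\<^sub>1 \<le> N \<Longrightarrow> s \<in> {0..1} \<Longrightarrow> dist (Tbar_poly N ks s) (Tbar_fun ks s) < e / 2"
      using lim unfolding uniform_limit_sequentially_iff by (meson half_gt_zero)
    obtain M\<^sub>2 where M\<^sub>2: "\<And>N. M\<^sub>2 \<le> N \<Longrightarrow> norm (Tbar_abs_partial N ks / real (2 * N - length ks - 1) - 0) < e / 2"
      using LIMSEQ_D[OF Tbar_abs_partial_div_tendsto_0[OF ks] half_gt_zero[OF \<open>0 < e\<close>]] by blast
    show "\<exists>M. \<forall>N\<ge>M. \<forall>t\<in>{0..1}. dist (Tbar_poly N (ks @ [k]) t) (Tbar_fun (ks @ [k]) t) < e"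
    proof (intro exI allI impI ballI)
      fix N t assume N: "max (max M\<^sub>1 M\<^sub>2) (length ks + 2) \<le> N" and t: "t \<in> {0..(1::real)}"
      have "\<bar>Tbar_poly N (ks @ [k]) t - Tbar_fun (ks @ [k]) t\<bar>
              \<le> e / 2 * t + Tbar_abs_partial N ks / real (2 * N - length ks - 1)"
      proof (rule abs_Tbar_poly_snoc_minus_Tbar_fun_le[OF k _ t cont])
        fix s :: real assume "s \<in> {0..1}"
        with M\<^sub>1[of N s] N show "\<bar>Tbar_poly N ks s - Tbar_fun ks s\<bar> \<le> e / 2"
          by (simp add: dist_real_def)
      qed (use N in simp)
      also have "\<dots> < e"
      proof -
        have "Tbar_abs_partial N ks / real (2 * N - length ks - 1) < e / 2"
          using M\<^sub>2[of N] N Tbar_abs_partial_nonneg[of N ks] by simp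
        moreover have "e / 2 * t \<le> e / 2"
          using t \<open>0 < e\<close> by (simp add: mult_left_le)
        ultimately have "e / 2 * t + Tbar_abs_partial N ks / real (2 * N - length ks - 1) < e / 2 + e / 2"
          by (intro add_le_less_mono)
        then show ?thesis
          by simp
      qed
      finally show "dist (Tbar_poly N (ks @ [k]) t) (Tbar_fun (ks @ [k]) t) < e"
        by (simp add: dist_real_def)
    qed
  qed
qed

lemma continuous_on_Tbar_fun: "\<forall>k\<in>set ks. 1 \<le> k \<Longrightarrow> continuous_on {0..1} (Tbar_fun ks)"
  by (rule uniform_limit_theorem[OF _ uniform_limit_Tbar_poly]) (auto simp: continuous_on_Tbar_poly)

lemma Tbar_eq_Tbar_fun:
  assumes "ks \<noteq> []" "\<forall>k\<in>set ks. 1 \<le> k"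
  shows "Tbar ks = 2 ^ length ks * Tbar_fun ks 1"
proof -
  have "(\<lambda>N. Tbar_poly N ks 1) \<longlonglongrightarrow> Tbar_fun ks 1"
    using tendsto_uniform_limitI[OF uniform_limit_Tbar_poly[OF assms(2)], of 1] by simp
  then have "lim (\<lambda>N. \<Sum>ns\<in>idx_set (length ks) N. Tbar_term ks ns) = Tbar_fun ks 1"
    unfolding Tbar_poly_1[OF assms(1)] by (rule limI)
  then show ?thesis
    unfolding Tbar_def by simp
qed

lemma Tbar_fun_at_0: "ks \<noteq> [] \<Longrightarrow> Tbar_fun ks 0 = 0"
  by (cases ks rule: rev_cases) (auto simp: Tbar_fun_snoc)

lemma continuous_on_Tbar_fun_weight:
  "\<forall>k\<in>set ks. 1 \<le> k \<Longrightarrow> continuous_on {0..1} (\<lambda>s. - Tbar_fun ks s / (1 + s ^ 2))"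
  by (intro continuous_intros continuous_on_Tbar_fun) simp_all

lemma has_real_derivative_Tbar_fun_snoc:
  assumes "\<forall>k\<in>set ks. 1 \<le> k" "u \<in> {0<..<1}" "1 \<le> k"
  shows "(Tbar_fun (ks @ [k]) has_real_derivative
            (if k = 1 then - Tbar_fun ks u / (1 + u ^ 2) else Tbar_fun (ks @ [k - 1]) u / u)) (at u)"
proof (cases k)
  case (Suc j)
  have eq: "Tbar_fun (ks @ [k]) = (\<lambda>t. integral {0..t} (\<lambda>s. log_kernel t j s * (- Tbar_fun ks s / (1 + s ^ 2))))"
    by (simp add: Tbar_fun_snoc Suc fun_eq_iff)
  show ?thesis
  proof (cases j)
    case 0
    have "isCont (\<lambda>s. - Tbar_fun ks s / (1 + s ^ 2)) u"
      using continuous_on_Tbar_fun_weight[OF assms(1)] assms(2)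
      by (intro continuous_on_interior[of "{0..1}"]) auto
    from has_real_derivative_indefinite_integral[OF
        integrable_continuous_real[OF continuous_on_Tbar_fun_weight[OF assms(1)]] assms(2) this]
    show ?thesis
      unfolding eq using Suc 0 by simp
  next
    case (Suc i)
    from has_real_derivative_integral_log_kernel[OF continuous_on_Tbar_fun_weight[OF assms(1)] assms(2), of i]
    show ?thesis
      unfolding eq using \<open>k = Suc j\<close> Suc by (simp add: Tbar_fun_snoc)
  qed
qed (use assms in simp)

lemma Tbar_fun_le_linear:
  assumes "ks \<noteq> []" "\<forall>k\<in>set ks. 1 \<le> k"
  obtains C where "\<And>s. s \<in> {0..1} \<Longrightarrow> \<bar>Tbar_fun ks s\<bar> \<le> C * s"
proof -
  obtain ks' k where ks: "ks = ks' @ [k]"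
    using assms(1) by (cases ks rule: rev_cases) auto
  define \<psi> where "\<psi> s = - Tbar_fun ks' s / (1 + s ^ 2)" for s
  have \<psi>: "continuous_on {0..1} \<psi>"
    unfolding \<psi>_def using assms ks by (intro continuous_on_Tbar_fun_weight) simp
  obtain B where B: "\<And>s. s \<in> {0..1} \<Longrightarrow> \<bar>\<psi> s\<bar> \<le> B"
    using compact_imp_bounded[OF compact_continuous_image[OF \<psi> compact_Icc]]
    unfolding bounded_iff by (metis image_eqI real_norm_def)
  have "\<bar>Tbar_fun ks s\<bar> \<le> B * s" if "s \<in> {0..1}" for s
    unfolding ks Tbar_fun_snoc \<psi>_def[symmetric] using that log_kernel_nonneg B
    by (intro abs_integral_kernel_mult_le has_integral_log_kernel continuous_on_subset[OF \<psi>]) auto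
  then show ?thesis
    using that by blast
qed

section \<open>Tuples of the form \<open>(1, \<dots>, 1, k)\<close>\<close>

lemma Tbar_fun_replicate_one:
  assumes "t \<in> {0..1}"
  shows "Tbar_fun (replicate m 1) t = (- arctan t) ^ m / fact m"
  using assms
proof (induction m arbitrary: t)
  case 0
  then show ?case
    by (simp add: Tbar_fun_Nil)
next
  case (Suc m)
  have "Tbar_fun (replicate (Suc m) 1) t = integral {0..t} (\<lambda>s. - ((- arctan s) ^ m / fact m) / (1 + s ^ 2))"
    unfolding replicate_Suc replicate_append_same[symmetric] Tbar_fun_snoc
    using Suc by (intro integral_cong) simp
  also have "\<dots> = (- arctan t) ^ Suc m / fact (Suc m) - (- arctan 0) ^ Suc m / fact (Suc m)"
  proof (intro integral_unique fundamental_theorem_of_calculus)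
    fix s :: real
    have "((\<lambda>s. - arctan s) has_real_derivative - (1 / (1 + s ^ 2))) (at s)"
      by (auto intro!: derivative_eq_intros simp: inverse_eq_divide)
    from has_real_derivative_power_div_fact[OF this, of m]
    show "((\<lambda>s. (- arctan s) ^ Suc m / fact (Suc m)) has_vector_derivative
            - ((- arctan s) ^ m / fact m) / (1 + s ^ 2)) (at s within {0..t})"
      by (auto simp: has_real_derivative_iff_has_vector_derivative intro: has_vector_derivative_at_within)
  qed (use Suc.prems in simp)
  finally show ?case
    by simp
qed

theorem Tbar_replicate_one_snoc:
  "Tbar (replicate m 1 @ [Suc j]) =
     (-1) ^ (j + m + 1) * 2 ^ (m + 1) / (fact j * fact m) *
     integral {0..1} (\<lambda>t. ln ((1 - t) / (1 + t)) ^ j * (pi / 4 - arctan t) ^ m / (1 + t\<^sup>2))"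
proof -
  define h where "h a = - ((- a) ^ m / fact m)" for a :: real
  define I where "I = integral {0..1} (\<lambda>t. ln ((1 - t) / (1 + t)) ^ j * (pi / 4 - arctan t) ^ m / (1 + t\<^sup>2))"
  have "Tbar (replicate m 1 @ [Suc j]) = 2 ^ (m + 1) * Tbar_fun (replicate m 1 @ [Suc j]) 1"
    by (subst Tbar_eq_Tbar_fun) auto
  also have "Tbar_fun (replicate m 1 @ [Suc j]) 1 =
               integral {0..1} (\<lambda>s. log_kernel 1 j s * (h (arctan s) / (1 + s ^ 2)))"
    unfolding Tbar_fun_snoc h_def by (intro integral_cong) (simp add: Tbar_fun_replicate_one[unfolded One_nat_def])
  also have "\<dots> = (-1) ^ j / fact j *
               integral {0..1} (\<lambda>t. ln ((1 - t) / (1 + t)) ^ j * h (pi / 4 - arctan t) / (1 + t ^ 2))"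
    unfolding h_def by (intro integral_log_kernel_arctan continuous_intros) simp
  also have "integral {0..1} (\<lambda>t. ln ((1 - t) / (1 + t)) ^ j * h (pi / 4 - arctan t) / (1 + t ^ 2)) =
               (-1) ^ (m + 1) / fact m * I"
    unfolding I_def integral_mult_right[symmetric] h_def
  proof (intro integral_cong)
    have sign: "L * - ((-1) ^ m * P / f) / q = (-1) ^ (m + 1) / f * (L * P / q)" for L P f q :: real
      by (simp add: divide_inverse)
    fix t :: real
    show "ln ((1 - t) / (1 + t)) ^ j * - ((- (pi / 4 - arctan t)) ^ m / fact m) / (1 + t ^ 2) =
        (-1) ^ (m + 1) / fact m * (ln ((1 - t) / (1 + t)) ^ j * (pi / 4 - arctan t) ^ m / (1 + t\<^sup>2))"
      unfolding power_minus[of "pi / 4 - arctan t"] by (rule sign)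
  qed
  finally show ?thesis
    unfolding I_def by (simp add: power_add field_simps)
qed

section \<open>Sums over compositions\<close>

lemma finite_I_set: "finite (I_set k r)"
proof (rule finite_subset)
  show "I_set k r \<subseteq> {ks. set ks \<subseteq> {0..k} \<and> length ks = r}"
    unfolding I_set_def using member_le_sum_list by fastforce
qed (simp add: finite_lists_length_eq)

lemma I_set_0: "I_set q 0 = (if q = 0 then {[]} else {})"
  unfolding I_set_def by auto

lemma I_set_pos: "ks \<in> I_set n r \<Longrightarrow> \<forall>k\<in>set ks. 1 \<le> k"
  unfolding I_set_def by auto

lemma I_set_length: "ks \<in> I_set n r \<Longrightarrow> length ks = r"
  unfolding I_set_def by auto

lemma sum_I_set_Suc:
  fixes F :: "nat list \<Rightarrow> real"
  shows "(\<Sum>ks\<in>I_set (Suc m + q) (Suc m). F ks) =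
           (\<Sum>c\<le>q. \<Sum>ks\<in>I_set (m + (q - c)) m. F (ks @ [Suc c]))"
proof -
  let ?S = "SIGMA c:{..q}. I_set (m + (q - c)) m"
  have "I_set (Suc m + q) (Suc m) = (\<lambda>(c, ks). ks @ [Suc c]) ` ?S"
  proof (intro set_eqI iffI)
    fix xs assume xs: "xs \<in> I_set (Suc m + q) (Suc m)"
    then obtain ks c where xs_eq: "xs = ks @ [Suc c]"
      by (cases xs rule: rev_cases) (auto simp: I_set_def gr0_conv_Suc)
    with xs have "length ks = m" "\<forall>y\<in>set ks. 0 < y" "sum_list ks + Suc c = Suc m + q"
      by (auto simp: I_set_def)
    moreover from this have "m \<le> sum_list ks"
      using length_le_sum_list by metis
    ultimately have "c \<le> q" "ks \<in> I_set (m + (q - c)) m"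
      by (auto simp: I_set_def)
    with xs_eq show "xs \<in> (\<lambda>(c, ks). ks @ [Suc c]) ` ?S"
      by force
  qed (auto simp: I_set_def)
  moreover have "inj_on (\<lambda>(c, ks). ks @ [Suc c]) ?S"
    by (auto simp: inj_on_def)
  ultimately have "(\<Sum>ks\<in>I_set (Suc m + q) (Suc m). F ks) = (\<Sum>(c, ks)\<in>?S. F (ks @ [Suc c]))"
    by (simp add: sum.reindex case_prod_unfold)
  also have "\<dots> = (\<Sum>c\<le>q. \<Sum>ks\<in>I_set (m + (q - c)) m. F (ks @ [Suc c]))"
    by (rule sum.Sigma[symmetric]) (auto simp: finite_I_set)
  finally show ?thesis .
qed

definition W_fun :: "nat \<Rightarrow> nat \<Rightarrow> real \<Rightarrow> real" where
  "W_fun m q t = (\<Sum>ks\<in>I_set (m + q) m. Tbar_fun ks t)"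

lemma W_fun_0: "W_fun 0 q t = (if q = 0 then 1 else 0)"
  by (simp add: W_fun_def I_set_0 Tbar_fun_Nil)

lemma continuous_on_W_fun: "continuous_on {0..1} (W_fun m q)"
  unfolding W_fun_def by (intro continuous_on_sum continuous_on_Tbar_fun) (auto dest: I_set_pos)

lemma W_fun_at_0: "W_fun (Suc m) q 0 = 0"
  unfolding W_fun_def by (intro sum.neutral ballI Tbar_fun_at_0) (auto dest: I_set_length)

lemma W_fun_le_linear:
  obtains C where "\<And>s. s \<in> {0..1} \<Longrightarrow> \<bar>W_fun (Suc m) q s\<bar> \<le> C * s"
proof -
  let ?A = "I_set (Suc m + q) (Suc m)"
  have "\<forall>ks\<in>?A. \<exists>C. \<forall>s\<in>{0..1}. \<bar>Tbar_fun ks s\<bar> \<le> C * s"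
  proof
    fix ks assume ks: "ks \<in> ?A"
    then have "ks \<noteq> []"
      using I_set_length by fastforce
    then obtain C where "\<And>s. s \<in> {0..1} \<Longrightarrow> \<bar>Tbar_fun ks s\<bar> \<le> C * s"
      using Tbar_fun_le_linear[OF _ I_set_pos[OF ks]] by blast
    then show "\<exists>C. \<forall>s\<in>{0..1}. \<bar>Tbar_fun ks s\<bar> \<le> C * s"
      by blast
  qed
  then obtain C where C: "\<And>ks s. ks \<in> ?A \<Longrightarrow> s \<in> {0..1} \<Longrightarrow> \<bar>Tbar_fun ks s\<bar> \<le> C ks * s"
    by metis
  have "\<bar>W_fun (Suc m) q s\<bar> \<le> (\<Sum>ks\<in>?A. C ks) * s" if "s \<in> {0..1}" for s
  proof -
    have "\<bar>W_fun (Suc m) q s\<bar> \<le> (\<Sum>ks\<in>?A. \<bar>Tbar_fun ks s\<bar>)"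
      unfolding W_fun_def by (simp add: sum_abs)
    also have "\<dots> \<le> (\<Sum>ks\<in>?A. C ks * s)"
      using C that by (intro sum_mono) auto
    finally show ?thesis
      by (simp add: sum_distrib_right)
  qed
  then show ?thesis
    using that by blast
qed

lemma has_real_derivative_W_fun:
  assumes u: "u \<in> {0<..<1}"
  shows "(W_fun (Suc m) q has_real_derivative
            (if q = 0 then 0 else W_fun (Suc m) (q - 1) u / u) - W_fun m q u / (1 + u ^ 2)) (at u)"
proof -
  define D where "D c ks = (if c = 0 then - Tbar_fun ks u / (1 + u ^ 2) else Tbar_fun (ks @ [c]) u / u)" for c ks
  have "W_fun (Suc m) q = (\<lambda>t. \<Sum>c\<le>q. \<Sum>ks\<in>I_set (m + (q - c)) m. Tbar_fun (ks @ [Suc c]) t)"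
    unfolding W_fun_def sum_I_set_Suc ..
  moreover have "((\<lambda>t. \<Sum>c\<le>q. \<Sum>ks\<in>I_set (m + (q - c)) m. Tbar_fun (ks @ [Suc c]) t)
                   has_real_derivative (\<Sum>c\<le>q. \<Sum>ks\<in>I_set (m + (q - c)) m. D c ks)) (at u)"
  proof (intro DERIV_sum)
    fix c ks assume "ks \<in> I_set (m + (q - c)) m"
    from has_real_derivative_Tbar_fun_snoc[OF I_set_pos[OF this] u, of "Suc c"]
    show "((\<lambda>t. Tbar_fun (ks @ [Suc c]) t) has_real_derivative D c ks) (at u)"
      by (cases c) (simp_all add: D_def)
  qed
  moreover have "(\<Sum>c\<le>q. \<Sum>ks\<in>I_set (m + (q - c)) m. D c ks) =
                   (if q = 0 then 0 else W_fun (Suc m) (q - 1) u / u) - W_fun m q u / (1 + u ^ 2)"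
  proof (cases q)
    case (Suc q')
    have "(\<Sum>c\<le>q'. \<Sum>ks\<in>I_set (m + (q' - c)) m. D (Suc c) ks) = W_fun (Suc m) q' u / u"
      unfolding W_fun_def sum_I_set_Suc sum_divide_distrib by (simp add: D_def)
    then show ?thesis
      unfolding Suc sum.atMost_Suc_shift
      by (simp add: D_def W_fun_def sum_negf sum_divide_distrib)
  qed (simp add: D_def W_fun_def sum_negf sum_divide_distrib)
  ultimately show ?thesis
    by simp
qed

text \<open>Weighting by the powers \<open>(- ln t)\<^sup>a / a!\<close> cancels the \<open>1/t\<close> terms in the derivative
  of \<open>W_fun\<close>.\<close>
definition W_log :: "nat \<Rightarrow> nat \<Rightarrow> real \<Rightarrow> real" where
  "W_log m e t = (\<Sum>a\<le>e. log_kernel 1 a t * W_fun m (e - a) t)"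

lemma W_log_0: "W_log 0 e t = log_kernel 1 e t"
proof -
  have "W_log 0 e t = (\<Sum>a\<le>e. if a = e then log_kernel 1 a t else 0)"
    unfolding W_log_def W_fun_0 by (intro sum.cong) auto
  then show ?thesis
    by simp
qed

lemma W_log_at_1: "W_log m e 1 = W_fun m e 1"
proof -
  have "W_log m e 1 = (\<Sum>a\<le>e. if a = 0 then W_fun m e 1 else 0)"
    unfolding W_log_def by (intro sum.cong) (auto simp: log_kernel_def)
  then show ?thesis
    by simp
qed

lemma W_log_at_0: "W_log (Suc m) e 0 = 0"
  by (simp add: W_log_def W_fun_at_0)

lemma has_real_derivative_W_log:
  assumes u: "u \<in> {0<..<1}"
  shows "(W_log (Suc m) e has_real_derivative - W_log m e u / (1 + u ^ 2)) (at u)"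
proof -
  define P where "P q = W_fun (Suc m) q u" for q
  define X where "X a = (if a = 0 then 0 else - log_kernel 1 (a - 1) u / u)" for a
  define Y where "Y q = (if q = 0 then 0 else P (q - 1) / u)" for q
  have "(W_log (Suc m) e has_real_derivative
          (\<Sum>a\<le>e. X a * P (e - a) + (Y (e - a) - W_fun m (e - a) u / (1 + u ^ 2)) * log_kernel 1 a u)) (at u)"
    unfolding W_log_def[abs_def] P_def X_def Y_def using u
    by (intro DERIV_sum DERIV_mult has_real_derivative_log_kernel_1 has_real_derivative_W_fun) auto
  also have "(\<Sum>a\<le>e. X a * P (e - a) + (Y (e - a) - W_fun m (e - a) u / (1 + u ^ 2)) * log_kernel 1 a u) =
      ((\<Sum>a\<le>e. X a * P (e - a)) + (\<Sum>a\<le>e. Y (e - a) * log_kernel 1 a u)) - W_log m e u / (1 + u ^ 2)"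
    unfolding W_log_def sum_divide_distrib sum.distrib[symmetric] sum_subtractf[symmetric]
    by (intro sum.cong) (simp_all add: algebra_simps)
  also have "(\<Sum>a\<le>e. X a * P (e - a)) + (\<Sum>a\<le>e. Y (e - a) * log_kernel 1 a u) = 0"
  proof (cases e)
    case (Suc e')
    have "(\<Sum>a\<le>e. X a * P (e - a)) = - (\<Sum>a\<le>e'. log_kernel 1 a u * P (e' - a) / u)"
      unfolding Suc X_def by (subst sum.atMost_Suc_shift) (simp add: sum_negf)
    moreover have "(\<Sum>a\<le>e. Y (e - a) * log_kernel 1 a u) = (\<Sum>a\<le>e'. log_kernel 1 a u * P (e' - a) / u)"
      unfolding Suc Y_def by (subst sum.atMost_Suc) (auto intro!: sum.cong simp: Suc_diff_le)
    ultimately show ?thesis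
      by simp
  qed (simp add: X_def Y_def)
  finally show ?thesis
    by simp
qed

lemma continuous_on_W_log: "continuous_on {0..1} (W_log (Suc m) e)"
  unfolding W_log_def[abs_def]
proof (intro continuous_on_sum)
  fix a
  obtain C where "\<And>s. s \<in> {0..1} \<Longrightarrow> \<bar>W_fun (Suc m) (e - a) s\<bar> \<le> C * s"
    using W_fun_le_linear by blast
  then show "continuous_on {0..1} (\<lambda>t. log_kernel 1 a t * W_fun (Suc m) (e - a) t)"
    by (intro continuous_on_log_kernel_mult continuous_on_W_fun)
qed

lemma integrable_W_log_mult:
  assumes "continuous_on {0..1} g"
  shows "(\<lambda>s. W_log m e s * g s) integrable_on {0..1}"
proof (cases m)
  case 0
  then show ?thesis
    using assms log_kernel_nonneg
    by (auto simp: W_log_0 intro!: kernel_mult_integrable[OF has_integral_log_kernel])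
next
  case (Suc m')
  then show ?thesis
    using assms continuous_on_W_log by (intro integrable_continuous_real continuous_intros) auto
qed

definition arctan_tail :: "nat \<Rightarrow> real \<Rightarrow> real" where
  "arctan_tail j s = (pi / 4 - arctan s) ^ j / fact j"

lemma arctan_tail_0 [simp]: "arctan_tail 0 s = 1"
  by (simp add: arctan_tail_def)

lemma arctan_tail_Suc_at_1: "arctan_tail (Suc j) 1 = 0"
  by (simp add: arctan_tail_def arctan_one)

lemma continuous_on_arctan_tail: "continuous_on A (arctan_tail j)"
  unfolding arctan_tail_def by (intro continuous_intros) simp

lemma has_real_derivative_arctan_tail:
  "(arctan_tail (Suc j) has_real_derivative - arctan_tail j s / (1 + s ^ 2)) (at s)"
proof -
  have "((\<lambda>s. pi / 4 - arctan s) has_real_derivative - (1 / (1 + s ^ 2))) (at s)"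
    by (auto intro!: derivative_eq_intros simp: inverse_eq_divide)
  from has_real_derivative_power_div_fact[OF this, of j] show ?thesis
    unfolding arctan_tail_def[abs_def] by simp
qed

lemma integral_W_log_arctan_tail_Suc:
  "integral {0..1} (\<lambda>s. W_log (Suc m) e s * arctan_tail i s / (1 + s ^ 2)) =
     - integral {0..1} (\<lambda>s. W_log m e s * arctan_tail (Suc i) s / (1 + s ^ 2))"
proof -
  define A where "A s = W_log m e s * arctan_tail (Suc i) s / (1 + s ^ 2)" for s
  define B where "B s = W_log (Suc m) e s * arctan_tail i s / (1 + s ^ 2)" for s
  define F where "F s = W_log (Suc m) e s * arctan_tail (Suc i) s" for s
  have ftc: "((\<lambda>s. - A s - B s) has_integral F 1 - F 0) {0..1}"
  proof (rule fundamental_theorem_of_calculus_interior)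
    show "continuous_on {0..1} F"
      unfolding F_def by (intro continuous_intros continuous_on_W_log continuous_on_arctan_tail)
    fix u :: real assume "u \<in> {0<..<1}"
    have "(F has_real_derivative - A u - B u) (at u)"
      unfolding F_def[abs_def]
      by (rule DERIV_cong[OF DERIV_mult[OF has_real_derivative_W_log[OF \<open>u \<in> {0<..<1}\<close>]
            has_real_derivative_arctan_tail]]) (simp add: A_def B_def algebra_simps)
    then show "(F has_vector_derivative - A u - B u) (at u)"
      by (simp add: has_real_derivative_iff_has_vector_derivative)
  qed simp
  have "A integrable_on {0..1}" "B integrable_on {0..1}"
    unfolding A_def B_def times_divide_eq_right[symmetric]
    by (intro integrable_W_log_mult continuous_intros continuous_on_arctan_tail; simp)+
  then have "((\<lambda>s. - A s - B s) has_integral - integral {0..1} A - integral {0..1} B) {0..1}"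
    by (intro has_integral_diff has_integral_neg integrable_integral)
  from has_integral_unique[OF this ftc] have "- integral {0..1} A - integral {0..1} B = 0"
    by (simp add: F_def arctan_tail_Suc_at_1 W_log_at_0)
  then show ?thesis
    unfolding A_def B_def by simp
qed

lemma integral_W_log_arctan_tail:
  "integral {0..1} (\<lambda>s. W_log m e s * arctan_tail i s / (1 + s ^ 2)) =
     (-1) ^ m * integral {0..1} (\<lambda>s. log_kernel 1 e s * arctan_tail (m + i) s / (1 + s ^ 2))"
proof (induction m arbitrary: i)
  case 0
  then show ?case
    by (simp add: W_log_0)
next
  case (Suc m)
  then show ?case
    by (simp add: integral_W_log_arctan_tail_Suc)
qed

lemma W_log_Suc_at_1:
  "W_log (Suc m) e 1 = (-1) ^ Suc m * integral {0..1} (\<lambda>s. log_kernel 1 e s * arctan_tail m s / (1 + s ^ 2))"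
proof -
  have "((\<lambda>s. - W_log m e s / (1 + s ^ 2)) has_integral W_log (Suc m) e 1 - W_log (Suc m) e 0) {0..1}"
  proof (rule fundamental_theorem_of_calculus_interior)
    fix u :: real assume "u \<in> {0<..<1}"
    from has_real_derivative_W_log[OF this]
    show "(W_log (Suc m) e has_vector_derivative - W_log m e u / (1 + u ^ 2)) (at u)"
      by (simp add: has_real_derivative_iff_has_vector_derivative)
  qed (simp_all add: continuous_on_W_log)
  then have "W_log (Suc m) e 1 = integral {0..1} (\<lambda>s. - W_log m e s / (1 + s ^ 2))"
    by (metis W_log_at_0 diff_zero integral_unique)
  also have "\<dots> = - integral {0..1} (\<lambda>s. W_log m e s * arctan_tail 0 s / (1 + s ^ 2))"
    by (simp add: integral_neg)
  finally show ?thesis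
    using integral_W_log_arctan_tail[of m e 0] by simp
qed

theorem W_eq_integral:
  "W (Suc m + j) (Suc m) =
     (-1) ^ (j + m + 1) * 2 ^ (m + 1) / (fact j * fact m) *
     integral {0..1} (\<lambda>t. ln ((1 - t) / (1 + t)) ^ j * arctan t ^ m / (1 + t\<^sup>2))"
proof -
  define h where "h a = (pi / 4 - a) ^ m / fact m" for a :: real
  have "W (Suc m + j) (Suc m) = 2 ^ (m + 1) * W_fun (Suc m) j 1"
    unfolding W_def W_fun_def sum_distrib_left
    by (intro sum.cong refl Tbar_eq_Tbar_fun[THEN trans])
       (auto dest: I_set_length I_set_pos)
  also have "W_fun (Suc m) j 1 = (-1) ^ Suc m * integral {0..1} (\<lambda>s. log_kernel 1 j s * (h (arctan s) / (1 + s ^ 2)))"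
    unfolding W_log_at_1[symmetric] W_log_Suc_at_1 h_def arctan_tail_def by (simp add: mult_ac)
  also have "integral {0..1} (\<lambda>s. log_kernel 1 j s * (h (arctan s) / (1 + s ^ 2))) =
               (-1) ^ j / fact j *
               integral {0..1} (\<lambda>t. ln ((1 - t) / (1 + t)) ^ j * h (pi / 4 - arctan t) / (1 + t ^ 2))"
    unfolding h_def by (intro integral_log_kernel_arctan continuous_intros) simp
  also have "integral {0..1} (\<lambda>t. ln ((1 - t) / (1 + t)) ^ j * h (pi / 4 - arctan t) / (1 + t ^ 2)) =
               1 / fact m * integral {0..1} (\<lambda>t. ln ((1 - t) / (1 + t)) ^ j * arctan t ^ m / (1 + t\<^sup>2))"
    unfolding integral_mult_right[symmetric] h_def by (intro integral_cong) simp
  finally show ?thesis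
    by (simp add: power_add field_simps)
qed

theorem mainTheorem5:
  fixes k r :: nat
  assumes "0 < k" and "0 < r"
  shows "(W (k + r - 1) r =
           (-1) ^ (k + r - 1) * 2 ^ r / (fact (k - 1) * fact (r - 1)) *
           integral {0..1} (\<lambda>t::real. ln ((1 - t) / (1 + t)) ^ (k - 1) * arctan t ^ (r - 1)
                                        / (1 + t\<^sup>2))) \<and>
         (Tbar (replicate (r - 1) 1 @ [k]) =
           (-1) ^ (k + r - 1) * 2 ^ r / (fact (k - 1) * fact (r - 1)) *
           integral {0..1} (\<lambda>t::real. ln ((1 - t) / (1 + t)) ^ (k - 1) * (pi / 4 - arctan t) ^ (r - 1)
                                        / (1 + t\<^sup>2)))"
proof -
  obtain j m where "k = Suc j" "r = Suc m"
    using assms by (metis gr0_implies_Suc)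
  then show ?thesis
    using W_eq_integral[of m j] Tbar_replicate_one_snoc[of m j] by (simp add: add_ac)
qed

end
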